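(* Let $G$ be the enhanced conflict graph of any traffic pattern in a multicast switch, and fix an input $i$. The subgraph of $G$ induced by the vertices representing subflows from input $i$ does not contain co-$P_3$ as an induced subgraph, where co-$P_3$ is the graph on three vertices $A,B,C$ with the single edge $BC$.
   Context: A flow is $(i,J)$ with input $i$ and nonempty fanout set $J$ of outputs; a traffic pattern is a finite set of flows; subflows are $(i,J,j)$ with $j\in J$. Enhanced conflict graph: one vertex per subflow; distinct subflows $(i,J,j),(i',J',j')$ adjacent iff $j=j'$, or $i=i'$ and $J\ne J'$. *)

theory Defs
  imports Main
begin

(* A flow is a pair (i, J): input i, fanout set J of outputs (nonempty).
   A traffic pattern is a finite set of flows. *)
definition traffic_pattern :: "('i \<times> 'o set) set \<Rightarrow> bool" where
  "traffic_pattern T \<longleftrightarrow> finite T \<and> (\<forall>(i, J) \<in> T. J \<noteq> {})"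

definition subflows :: "('i \<times> 'o set) set \<Rightarrow> ('i \<times> 'o set \<times> 'o) set" where
  "subflows T = {(i, J, j). (i, J) \<in> T \<and> j \<in> J}"

definition ecg_adj :: "('i \<times> 'o set \<times> 'o) \<Rightarrow> ('i \<times> 'o set \<times> 'o) \<Rightarrow> bool" where
  "ecg_adj u v \<longleftrightarrow> u \<noteq> v \<and>
     (case u of (i, J, j) \<Rightarrow> case v of (i', J', j') \<Rightarrow> j = j' \<or> (i = i' \<and> J \<noteq> J'))"

definition subflows_from :: "('i \<times> 'o set) set \<Rightarrow> 'i \<Rightarrow> ('i \<times> 'o set \<times> 'o) set" where
  "subflows_from T i = {v \<in> subflows T. fst v = i}"

definition has_induced_coP3 :: "'v set \<Rightarrow> ('v \<Rightarrow> 'v \<Rightarrow> bool) \<Rightarrow> bool" where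
  "has_induced_coP3 V E \<longleftrightarrow> (\<exists>a\<in>V. \<exists>b\<in>V. \<exists>c\<in>V. a \<noteq> b \<and> a \<noteq> c \<and> b \<noteq> c \<and>
      E b c \<and> \<not> E a b \<and> \<not> E a c)"

end

theory Submission
  imports Defs
begin

text \<open>Among subflows from a common input, two distinct vertices are non-adjacent exactly when
  they belong to the same flow and go to different outputs. Non-adjacency therefore means
  "same fanout set", an equivalence relation, and an equivalence relation on distinct vertices
  cannot have A related to B and C without B related to C.\<close>

lemma not_ecg_adj_same_input_iff:
  assumes "u \<noteq> v" and "fst u = fst v"
  shows "\<not> ecg_adj u v \<longleftrightarrow> fst (snd u) = fst (snd v) \<and> snd (snd u) \<noteq> snd (snd v)"
  using assms by (auto simp: ecg_adj_def split: prod.splits)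

theorem lemma2:
  fixes T :: "('i \<times> 'o set) set" and i :: 'i
  assumes "traffic_pattern T"
  shows "\<not> has_induced_coP3 (subflows_from T i) ecg_adj"
proof
  assume "has_induced_coP3 (subflows_from T i) ecg_adj"
  then obtain a b c where
    abc: "a \<in> subflows_from T i" "b \<in> subflows_from T i" "c \<in> subflows_from T i"
    and distinct: "a \<noteq> b" "a \<noteq> c" "b \<noteq> c"
    and "ecg_adj b c" "\<not> ecg_adj a b" "\<not> ecg_adj a c"
    unfolding has_induced_coP3_def by blast
  have same_input: "fst a = fst b" "fst a = fst c" "fst b = fst c"
    using abc by (auto simp: subflows_from_def)
  have "fst (snd b) = fst (snd c)"
    using \<open>\<not> ecg_adj a b\<close> \<open>\<not> ecg_adj a c\<close> distinct same_input
    by (simp add: not_ecg_adj_same_input_iff)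
  moreover have "snd (snd b) \<noteq> snd (snd c)"
    using calculation same_input \<open>b \<noteq> c\<close> by (auto simp: prod_eq_iff)
  ultimately have "\<not> ecg_adj b c"
    using not_ecg_adj_same_input_iff[OF \<open>b \<noteq> c\<close> \<open>fst b = fst c\<close>] by blast
  then show False using \<open>ecg_adj b c\<close> by contradiction
qed

end
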